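(* Let $n\ge 3$. For every $A\subseteq[n]$, the operator $\Gamma_A$ belongs to the unital associative algebra (over $\mathbb{R}$) generated by the operators $\Gamma_B$ with $B\subseteq[n]$, $|B|=2$; i.e. each $\Gamma_A$ is a polynomial (with real coefficients depending on $\mu_1,\dots,\mu_n$) in the $\Gamma_{\{i,j\}}$, $1\le i<j\le n$.
   Context: Fix $n\ge1$ and real parameters $\mu_1,\dots,\mu_n>0$; write $[n]=\{1,\dots,n\}$. For $i\in[n]$, $r_i$ is the reflection $(r_if)(x)=f(x_1,\dots,-x_i,\dots,x_n)$ and $T_i=\partial_{x_i}+\frac{\mu_i}{x_i}(1-r_i)$. $\mathcal{C}\ell_n$ is generated by $e_1,\dots,e_n$ with $e_ie_j+e_je_i=-2\delta_{ij}$, $V$ is a fixed left $\mathcal{C}\ell_n$-module, and operators act on $\mathcal{P}(\mathbb{R}^n)\otimes V$ with $x_i,T_i,r_i$ acting on the polynomial factor and $e_i$ on $V$. For $A\subseteq[n]$: $\underline{D}_A=\sum_{i\in A}e_iT_i$, $\underline{x}_A=\sum_{i\in A}e_ix_i$, $\underline{S}_A=\frac12([\underline{x}_A,\underline{D}_A]-1)$, $\Gamma_A=\underline{S}_A\prod_{i\in A}r_i$ (empty sums $0$, empty products $1$). *)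

theory Defs
  imports Complex_Main
begin

text \<open>
Model of P(R^n) (x) V.  The coordinate index set [n] is the finite type 'n (so n = CARD('n)).
A multi-index alpha :: 'n => nat stands for the monomial x^alpha.  An element of P(R^n) (x) V is
represented by its coefficient function f :: ('n => nat) => 'v (coefficient of x^alpha in V),
and the genuine elements are those with finite support (set Pspace).  V is a real vector space
'v with a left Cl_n action given by linear maps e i satisfying e_i e_j + e_j e_i = -2 delta_ij.
\<close>

type_synonym ('n, 'v) elt = "('n \<Rightarrow> nat) \<Rightarrow> 'v"
type_synonym ('n, 'v) oper = "('n, 'v) elt \<Rightarrow> ('n, 'v) elt"

definition Pspace :: "('n, 'v::zero) elt set" where
  "Pspace = {f. finite {\<alpha>. f \<alpha> \<noteq> 0}}"

definition xop :: "'n \<Rightarrow> ('n, 'v::real_vector) oper" where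
  "xop i f = (\<lambda>\<alpha>. if \<alpha> i = 0 then 0 else f (\<alpha>(i := \<alpha> i - 1)))"

definition dop :: "'n \<Rightarrow> ('n, 'v::real_vector) oper" where
  "dop i f = (\<lambda>\<alpha>. real (\<alpha> i + 1) *\<^sub>R f (\<alpha>(i := \<alpha> i + 1)))"

text \<open>reflection r_i: (r_i f)(x) = f(.., -x_i, ..)\<close>
definition rop :: "'n \<Rightarrow> ('n, 'v::real_vector) oper" where
  "rop i f = (\<lambda>\<alpha>. ((-1::real) ^ \<alpha> i) *\<^sub>R f \<alpha>)"

text \<open>division by x_i (exact on polynomials divisible by x_i, such as (1 - r_i) f)\<close>
definition divx :: "'n \<Rightarrow> ('n, 'v::real_vector) oper" where
  "divx i f = (\<lambda>\<alpha>. f (\<alpha>(i := \<alpha> i + 1)))"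

definition Top :: "('n \<Rightarrow> real) \<Rightarrow> 'n \<Rightarrow> ('n, 'v::real_vector) oper" where
  "Top \<mu> i f = (\<lambda>\<alpha>. dop i f \<alpha> + \<mu> i *\<^sub>R divx i (\<lambda>\<beta>. f \<beta> - rop i f \<beta>) \<alpha>)"

definition eop :: "('n \<Rightarrow> 'v \<Rightarrow> 'v) \<Rightarrow> 'n \<Rightarrow> ('n, 'v::real_vector) oper" where
  "eop e i f = (\<lambda>\<alpha>. e i (f \<alpha>))"

definition DA :: "('n \<Rightarrow> real) \<Rightarrow> ('n \<Rightarrow> 'v \<Rightarrow> 'v) \<Rightarrow> 'n set \<Rightarrow> ('n, 'v::real_vector) oper" where
  "DA \<mu> e A f = (\<lambda>\<alpha>. \<Sum>i\<in>A. eop e i (Top \<mu> i f) \<alpha>)"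

definition XA :: "('n \<Rightarrow> 'v \<Rightarrow> 'v) \<Rightarrow> 'n set \<Rightarrow> ('n, 'v::real_vector) oper" where
  "XA e A f = (\<lambda>\<alpha>. \<Sum>i\<in>A. eop e i (xop i f) \<alpha>)"

definition SA :: "('n \<Rightarrow> real) \<Rightarrow> ('n \<Rightarrow> 'v \<Rightarrow> 'v) \<Rightarrow> 'n set \<Rightarrow> ('n, 'v::real_vector) oper" where
  "SA \<mu> e A f = (\<lambda>\<alpha>. (1/2::real) *\<^sub>R
      (XA e A (DA \<mu> e A f) \<alpha> - DA \<mu> e A (XA e A f) \<alpha> - f \<alpha>))"

definition rA :: "'n set \<Rightarrow> ('n, 'v::real_vector) oper" where
  "rA A f = (\<lambda>\<alpha>. (\<Prod>i\<in>A. (-1::real) ^ \<alpha> i) *\<^sub>R f \<alpha>)"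

definition Gamma :: "('n \<Rightarrow> real) \<Rightarrow> ('n \<Rightarrow> 'v \<Rightarrow> 'v) \<Rightarrow> 'n set \<Rightarrow> ('n, 'v::real_vector) oper" where
  "Gamma \<mu> e A f = SA \<mu> e A (rA A f)"

inductive_set gen_alg :: "('n set \<Rightarrow> ('n, 'v::real_vector) oper) \<Rightarrow> ('n, 'v) oper set"
  for G :: "'n set \<Rightarrow> ('n, 'v) oper" where
  one: "(\<lambda>f. f) \<in> gen_alg G"
| gen: "card B = 2 \<Longrightarrow> G B \<in> gen_alg G"
| smult: "F \<in> gen_alg G \<Longrightarrow> (\<lambda>f \<alpha>. c *\<^sub>R F f \<alpha>) \<in> gen_alg G"
| add: "F \<in> gen_alg G \<Longrightarrow> H \<in> gen_alg G \<Longrightarrow> (\<lambda>f \<alpha>. F f \<alpha> + H f \<alpha>) \<in> gen_alg G"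
| mult: "F \<in> gen_alg G \<Longrightarrow> H \<in> gen_alg G \<Longrightarrow> (\<lambda>f. F (H f)) \<in> gen_alg G"

end

theory Submission
  imports Defs
begin

text \<open>
All operators involved are polynomials in the Clifford generators \<open>e\<^sub>i\<close>, the coordinates
\<open>x\<^sub>i\<close>, the Dunkl operators \<open>T\<^sub>i\<close> and the reflections \<open>r\<^sub>i\<close>, and only the commutation relations
among these enter.  From them one computes, for \<open>j \<noteq> k\<close> outside a set \<open>C\<close>,
\<open>{\<Gamma>\<^bsub>C\<union>{j}\<^esub>, \<Gamma>\<^bsub>{j,k}\<^esub>} = \<Gamma>\<^bsub>C\<union>{k}\<^esub> + 2\<mu>\<^sub>j \<Gamma>\<^bsub>C\<union>{j,k}\<^esub> + 2\<mu>\<^sub>k \<Gamma>\<^bsub>C\<^esub>\<close>.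
Since \<open>\<mu>\<^sub>j \<noteq> 0\<close>, this expresses \<open>\<Gamma>\<^bsub>A\<^esub>\<close>, \<open>|A| \<ge> 3\<close>, through \<open>\<Gamma>\<close>'s of smaller index sets, and
induction on \<open>|A|\<close> ends at \<open>\<Gamma>\<^bsub>\<emptyset>\<^esub> = -1/2\<close>, \<open>\<Gamma>\<^bsub>{i}\<^esub> = \<mu>\<^sub>i\<close> and the generators \<open>|A| = 2\<close>.
\<close>

lemma mult_commute_mult:
  fixes a :: "'a::semigroup_mult"
  assumes "a * b = b' * a" "a * c = c' * a"
  shows "a * (b * c) = (b' * c') * a"
  by (metis assms mult.assoc)

lemma mult_commute_sum:
  fixes a :: "'a::semiring_0"
  assumes "\<And>i. i \<in> C \<Longrightarrow> a * u i = u i * a"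
  shows "a * sum u C = sum u C * a"
  using assms by (simp add: sum_distrib_left sum_distrib_right)

lemma mult_anticommute_sum:
  fixes a :: "'a::ring"
  assumes "\<And>i. i \<in> C \<Longrightarrow> a * u i = - (u i * a)"
  shows "a * sum u C = - (sum u C * a)"
  using assms by (simp add: sum_distrib_left sum_distrib_right sum_negf[symmetric])

lemma mult_left_rewrite: "(a::'a::semigroup_mult) * b = c \<Longrightarrow> a * (b * z) = c * z"
  by (simp add: mult.assoc[symmetric])

lemma scaleR_2_split:
  "(c * 2) *\<^sub>R m = c *\<^sub>R m + c *\<^sub>R m" "(2 * c) *\<^sub>R m = c *\<^sub>R m + c *\<^sub>R m"
  for m :: "'a::real_vector"
  by (simp_all add: scaleR_add_left[symmetric])

lemma scaleR_2_collect:
  "a *\<^sub>R m + a *\<^sub>R m = (2 * a) *\<^sub>R m" "a *\<^sub>R m + (a *\<^sub>R m + r) = (2 * a) *\<^sub>R m + r"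
  "m + m = 2 *\<^sub>R m" "m + (m + r) = 2 *\<^sub>R m + r"
  for m :: "'a::real_vector"
  by (simp_all add: scaleR_add_left[symmetric] add.assoc[symmetric] scaleR_2)

text \<open>
\<open>RA C\<close> plays the role of \<open>\<Prod>\<^sub>i\<^sub>\<in>\<^sub>C R i\<close>, which cannot be written as \<open>prod\<close> because \<open>'a\<close> is not
commutative.  The class omits \<open>zero_neq_one\<close>, which fails for operators on the zero module.
\<close>

locale dunkl_clifford =
  fixes \<mu> :: "'n \<Rightarrow> real"
    and E X T R :: "'n \<Rightarrow> 'a::{real_algebra, monoid_mult}"
    and RA :: "'n set \<Rightarrow> 'a"
  assumes E_clifford: "E i * E j + E j * E i = (if i = j then (-2) *\<^sub>R 1 else 0)"
    and E_X: "E i * X j = X j * E i"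
    and E_T: "E i * T j = T j * E i"
    and E_R: "E i * R j = R j * E i"
    and X_X: "X i * X j = X j * X i"
    and T_T: "T i * T j = T j * T i"
    and X_T: "i \<noteq> j \<Longrightarrow> X i * T j = T j * X i"
    and T_X_same: "T i * X i = X i * T i + 1 + (2 * \<mu> i) *\<^sub>R R i"
    and R_R_same: "R i * R i = 1"
    and R_R: "R i * R j = R j * R i"
    and R_X: "i \<noteq> j \<Longrightarrow> R i * X j = X j * R i"
    and R_T: "i \<noteq> j \<Longrightarrow> R i * T j = T j * R i"
    and R_X_same: "R i * X i = - (X i * R i)"
    and R_T_same: "R i * T i = - (T i * R i)"
    and RA_empty: "RA {} = 1"
    and RA_insert: "finite C \<Longrightarrow> j \<notin> C \<Longrightarrow> RA (insert j C) = RA C * R j"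
begin

definition Y :: "'n \<Rightarrow> 'a" where "Y i = E i * X i"
definition Z :: "'n \<Rightarrow> 'a" where "Z i = E i * T i"
definition xvec :: "'n set \<Rightarrow> 'a" where "xvec C = (\<Sum>i\<in>C. Y i)"
definition dirac :: "'n set \<Rightarrow> 'a" where "dirac C = (\<Sum>i\<in>C. Z i)"
definition S :: "'n set \<Rightarrow> 'a" where "S C = (1/2) *\<^sub>R (xvec C * dirac C - dirac C * xvec C - 1)"
definition Gam :: "'n set \<Rightarrow> 'a" where "Gam C = S C * RA C"

lemma E_anticommute: "i \<noteq> j \<Longrightarrow> E j * E i = - (E i * E j)"
  using E_clifford[of i j] by (simp add: eq_neg_iff_add_eq_0 add.commute)

lemma E_square: "E i * E i = - 1"
proof -
  have "2 *\<^sub>R (E i * E i) = 2 *\<^sub>R (- 1)"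
    using E_clifford[of i i] by (simp add: scaleR_2)
  then show ?thesis by (metis scaleR_cancel_left zero_neq_numeral)
qed

lemma E_mult_anticommute:
  assumes "i \<noteq> j" "U * E j = E j * U" "W * E i = E i * W" "U * W = W * U"
  shows "(E i * U) * (E j * W) = - ((E j * W) * (E i * U))"
proof -
  have "(E i * U) * (E j * W) = (E i * E j) * (U * W)"
    by (metis assms(2) mult.assoc)
  moreover have "(E j * W) * (E i * U) = (E j * E i) * (W * U)"
    by (metis assms(3) mult.assoc)
  ultimately show ?thesis using E_anticommute[OF assms(1)] assms(4) by simp
qed

lemma Y_Y: "i \<noteq> j \<Longrightarrow> Y i * Y j = - (Y j * Y i)"
  unfolding Y_def by (rule E_mult_anticommute) (auto simp: E_X X_X)
lemma Y_Z: "i \<noteq> j \<Longrightarrow> Y i * Z j = - (Z j * Y i)"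
  unfolding Y_def Z_def by (rule E_mult_anticommute) (auto simp: E_X E_T X_T)
lemma Z_Y: "i \<noteq> j \<Longrightarrow> Z i * Y j = - (Y j * Z i)"
  unfolding Y_def Z_def by (rule E_mult_anticommute) (auto simp: E_X E_T X_T)
lemma Z_Z: "i \<noteq> j \<Longrightarrow> Z i * Z j = - (Z j * Z i)"
  unfolding Z_def by (rule E_mult_anticommute) (auto simp: E_T T_T)

lemma R_Y: "i \<noteq> j \<Longrightarrow> R i * Y j = Y j * R i"
  unfolding Y_def using mult_commute_mult[of "R i" "E j" "E j" "X j" "X j"] by (simp add: E_R R_X)
lemma R_Z: "i \<noteq> j \<Longrightarrow> R i * Z j = Z j * R i"
  unfolding Z_def using mult_commute_mult[of "R i" "E j" "E j" "T j" "T j"] by (simp add: E_R R_T)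
lemma R_Y_same: "R i * Y i = - (Y i * R i)"
  unfolding Y_def using mult_commute_mult[of "R i" "E i" "E i" "X i" "- X i"] by (simp add: E_R R_X_same)
lemma R_Z_same: "R i * Z i = - (Z i * R i)"
  unfolding Z_def using mult_commute_mult[of "R i" "E i" "E i" "T i" "- T i"] by (simp add: E_R R_T_same)

lemma Y_Z_same: "Y i * Z i - Z i * Y i = 1 + (2 * \<mu> i) *\<^sub>R R i"
proof -
  have "Y i * Z i = (E i * E i) * (X i * T i)"
    unfolding Y_def Z_def by (metis E_X mult.assoc)
  moreover have "Z i * Y i = (E i * E i) * (T i * X i)"
    unfolding Y_def Z_def by (metis E_T mult.assoc)
  ultimately show ?thesis by (simp add: E_square T_X_same)
qed

lemma RA_commute:
  assumes "finite C" "\<And>i. i \<in> C \<Longrightarrow> R i * a = a * R i"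
  shows "RA C * a = a * RA C"
  using assms
proof (induction C rule: finite_induct)
  case (insert j C)
  then show ?case by (simp add: RA_insert mult.assoc) (metis mult.assoc)
qed (simp add: RA_empty)

lemma RA_Y: "finite C \<Longrightarrow> j \<notin> C \<Longrightarrow> RA C * Y j = Y j * RA C"
  by (rule RA_commute) (auto intro: R_Y)
lemma RA_Z: "finite C \<Longrightarrow> j \<notin> C \<Longrightarrow> RA C * Z j = Z j * RA C"
  by (rule RA_commute) (auto intro: R_Z)
lemma RA_R: "finite C \<Longrightarrow> RA C * R j = R j * RA C"
  by (rule RA_commute) (auto intro: R_R)

lemma Y_xvec: "j \<notin> C \<Longrightarrow> Y j * xvec C = - (xvec C * Y j)"
  unfolding xvec_def by (rule mult_anticommute_sum) (metis Y_Y)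
lemma Y_dirac: "j \<notin> C \<Longrightarrow> Y j * dirac C = - (dirac C * Y j)"
  unfolding dirac_def by (rule mult_anticommute_sum) (metis Y_Z)
lemma Z_xvec: "j \<notin> C \<Longrightarrow> Z j * xvec C = - (xvec C * Z j)"
  unfolding xvec_def by (rule mult_anticommute_sum) (metis Z_Y)
lemma Z_dirac: "j \<notin> C \<Longrightarrow> Z j * dirac C = - (dirac C * Z j)"
  unfolding dirac_def by (rule mult_anticommute_sum) (metis Z_Z)
lemma R_xvec: "j \<notin> C \<Longrightarrow> R j * xvec C = xvec C * R j"
  unfolding xvec_def by (rule mult_commute_sum) (metis R_Y)
lemma R_dirac: "j \<notin> C \<Longrightarrow> R j * dirac C = dirac C * R j"
  unfolding dirac_def by (rule mult_commute_sum) (metis R_Z)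

lemma S_commute:
  assumes "a * xvec C = s *\<^sub>R (xvec C * a)" "a * dirac C = s *\<^sub>R (dirac C * a)" "s * s = 1"
  shows "a * S C = S C * a"
proof -
  have x: "a * xvec C = (s *\<^sub>R xvec C) * a" and d: "a * dirac C = (s *\<^sub>R dirac C) * a"
    using assms by simp_all
  have "a * (xvec C * dirac C) = (xvec C * dirac C) * a"
    using mult_commute_mult[OF x d] assms(3) by simp
  moreover have "a * (dirac C * xvec C) = (dirac C * xvec C) * a"
    using mult_commute_mult[OF d x] assms(3) by simp
  ultimately show ?thesis unfolding S_def by (simp add: algebra_simps)
qed

lemma Y_S: "j \<notin> C \<Longrightarrow> Y j * S C = S C * Y j"
  by (rule S_commute[where s="-1"]) (simp_all add: Y_xvec Y_dirac)
lemma Z_S: "j \<notin> C \<Longrightarrow> Z j * S C = S C * Z j"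
  by (rule S_commute[where s="-1"]) (simp_all add: Z_xvec Z_dirac)
lemma R_S: "j \<notin> C \<Longrightarrow> R j * S C = S C * R j"
  by (rule S_commute[where s=1]) (simp_all add: R_xvec R_dirac)

lemma S_empty: "S {} = - ((1/2) *\<^sub>R 1)"
  by (simp add: S_def xvec_def dirac_def)

lemma S_insert:
  assumes "finite C" "j \<notin> C"
  shows "S (insert j C) = S C + (1/2) *\<^sub>R 1 + \<mu> j *\<^sub>R R j + xvec C * Z j + Y j * dirac C"
proof -
  have x: "xvec (insert j C) = Y j + xvec C" and d: "dirac (insert j C) = Z j + dirac C"
    using assms by (simp_all add: xvec_def dirac_def)
  have "xvec (insert j C) * dirac (insert j C) - dirac (insert j C) * xvec (insert j C) =
     (Y j * Z j - Z j * Y j) + (xvec C * dirac C - dirac C * xvec C)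
      + (Y j * dirac C - dirac C * Y j) + (xvec C * Z j - Z j * xvec C)"
    unfolding x d by (simp add: algebra_simps)
  also have "\<dots> = 1 + (2 * \<mu> j) *\<^sub>R R j + (xvec C * dirac C - dirac C * xvec C)
      + 2 *\<^sub>R (Y j * dirac C) + 2 *\<^sub>R (xvec C * Z j)"
    using assms by (simp add: Y_Z_same Y_dirac Z_xvec scaleR_2)
  finally have commutator: "xvec (insert j C) * dirac (insert j C) - dirac (insert j C) * xvec (insert j C) = \<dots>" .
  show ?thesis unfolding S_def commutator by (simp add: algebra_simps)
qed

lemma Gam_anticommutator:
  assumes C: "finite C" and jk: "j \<noteq> k" and jC: "j \<notin> C" and kC: "k \<notin> C"
  shows "Gam (insert j C) * Gam {j,k} + Gam {j,k} * Gam (insert j C)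
     = Gam (insert k C) + (2 * \<mu> j) *\<^sub>R Gam (insert j (insert k C)) + (2 * \<mu> k) *\<^sub>R Gam C"
proof -
  have kj: "k \<noteq> j" using jk by simp
  have Z_Y_same: "Z j * Y j = Y j * Z j - 1 - (2 * \<mu> j) *\<^sub>R R j"
    "Z k * Y k = Y k * Z k - 1 - (2 * \<mu> k) *\<^sub>R R k"
    using Y_Z_same[of j] Y_Z_same[of k] by (simp_all add: algebra_simps)
  have xvec_insert: "xvec (insert k C) = Y k + xvec C" and dirac_insert: "dirac (insert k C) = Z k + dirac C"
    using C kC by (simp_all add: xvec_def dirac_def)
  have Gam_jC: "Gam (insert j C)
      = (S C + (1/2) *\<^sub>R 1 + \<mu> j *\<^sub>R R j + xvec C * Z j + Y j * dirac C) * (RA C * R j)"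
    using C jC by (simp add: Gam_def S_insert RA_insert)
  have Gam_kC: "Gam (insert k C)
      = (S C + (1/2) *\<^sub>R 1 + \<mu> k *\<^sub>R R k + xvec C * Z k + Y k * dirac C) * (RA C * R k)"
    using C kC by (simp add: Gam_def S_insert RA_insert)
  have Gam_jk: "Gam {j,k} = ((1/2) *\<^sub>R 1 + \<mu> j *\<^sub>R R j + \<mu> k *\<^sub>R R k + Y k * Z j + Y j * Z k) * (R k * R j)"
    using jk by (simp add: Gam_def S_insert RA_insert S_empty RA_empty xvec_def dirac_def algebra_simps)
  have Gam_jkC: "Gam (insert j (insert k C)) = (S C + (1/2) *\<^sub>R 1 + \<mu> k *\<^sub>R R k + xvec C * Z k + Y k * dirac C
      + (1/2) *\<^sub>R 1 + \<mu> j *\<^sub>R R j + (Y k + xvec C) * Z j + Y j * (Z k + dirac C)) * (RA C * R k * R j)"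
    using C jC kC jk by (simp add: Gam_def S_insert RA_insert xvec_insert dirac_insert)
  note relations = R_Z_same[of j] R_Y_same[of j] R_Z_same[of k] R_Y_same[of k]
    R_Z[OF jk] R_Y[OF jk] R_Z[OF kj] R_Y[OF kj] R_R[of k j] R_R_same[of j] R_R_same[of k]
    Z_Y_same Y_Y[OF kj] Z_Y[OF jk] Z_Y[OF kj] Z_Z[OF kj]
    Y_S[OF jC] Z_S[OF jC] R_S[OF jC] Y_S[OF kC] Z_S[OF kC] R_S[OF kC]
    Y_xvec[OF jC] Y_dirac[OF jC] Z_xvec[OF jC] Z_dirac[OF jC] R_xvec[OF jC] R_dirac[OF jC]
    Y_xvec[OF kC] Y_dirac[OF kC] Z_xvec[OF kC] Z_dirac[OF kC] R_xvec[OF kC] R_dirac[OF kC]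
    RA_Y[OF C jC] RA_Z[OF C jC] RA_R[OF C, of j] RA_Y[OF C kC] RA_Z[OF C kC] RA_R[OF C, of k]
  show ?thesis unfolding Gam_jC Gam_kC Gam_jk Gam_jkC Gam_def[of C]
    by (simp add: algebra_simps relations relations[THEN mult_left_rewrite] scaleR_2_split)
      (simp add: scaleR_2_collect mult_ac)
qed

lemma Gam_empty: "Gam {} = (- 1/2) *\<^sub>R 1"
  by (simp add: Gam_def S_empty RA_empty)

lemma Gam_singleton: "Gam {i} = \<mu> i *\<^sub>R 1"
  using RA_insert[of "{}" i] by (simp add: Gam_def S_insert S_empty RA_empty xvec_def dirac_def mult.assoc R_R_same)

lemma Gam_in_subalgebra:
  assumes "finite A" and \<mu>_nonzero: "\<And>i. \<mu> i \<noteq> 0"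
    and one: "P 1"
    and scaleR: "\<And>c a. P a \<Longrightarrow> P (c *\<^sub>R a)"
    and add: "\<And>a b. P a \<Longrightarrow> P b \<Longrightarrow> P (a + b)"
    and mult: "\<And>a b. P a \<Longrightarrow> P b \<Longrightarrow> P (a * b)"
    and gen: "\<And>B. card B = 2 \<Longrightarrow> P (Gam B)"
  shows "P (Gam A)"
  using \<open>finite A\<close>
proof (induction "card A" arbitrary: A rule: less_induct)
  case less
  have diff: "P (a - b)" if "P a" "P b" for a b
    using add[OF that(1) scaleR[OF that(2), of "-1"]] by simp
  consider "card A = 0" | "card A = 1" | "card A = 2" | "card A \<ge> 3" by linarith
  then show ?case
  proof cases
    case 1
    then have "A = {}" using less.prems by simp
    then show ?thesis using scaleR[OF one] by (simp only: Gam_empty)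
  next
    case 2
    then show ?thesis using one scaleR by (auto simp: card_1_singleton_iff Gam_singleton)
  next
    case 3
    then show ?thesis by (rule gen)
  next
    case 4
    then have "\<not> card A \<le> Suc 0" by simp
    then obtain j k where jk: "j \<in> A" "k \<in> A" "j \<noteq> k"
      using card_le_Suc0_iff_eq[OF less.prems] by blast
    define C where "C = A - {j, k}"
    have A: "A = insert j (insert k C)" and jC: "j \<notin> C" and kC: "k \<notin> C" and C: "finite C"
      using jk less.prems by (auto simp: C_def)
    have card_A: "card A = card C + 2" using A C jC kC \<open>j \<noteq> k\<close> by simp
    have smaller: "P (Gam B)" if "finite B" "card B < card A" for B
      using less.hyps that by blast
    have "Gam A = (1 / (2 * \<mu> j)) *\<^sub>R (Gam (insert j C) * Gam {j,k} + Gam {j,k} * Gam (insert j C)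
        - Gam (insert k C) - (2 * \<mu> k) *\<^sub>R Gam C)"
      using Gam_anticommutator[OF C \<open>j \<noteq> k\<close> jC kC] \<mu>_nonzero[of j] unfolding A by (simp add: algebra_simps)
    also have "P \<dots>"
      using C jC kC \<open>j \<noteq> k\<close> card_A
      by (intro scaleR diff add mult smaller gen) auto
    finally show ?thesis .
  qed
qed

end

text \<open>Linearity is what makes composition distribute over sums from the left.\<close>

definition linop :: "('n, 'v::real_vector) oper \<Rightarrow> bool" where
  "linop F \<longleftrightarrow> (\<forall>f g. F (\<lambda>a. f a + g a) = (\<lambda>a. F f a + F g a)) \<and>
                (\<forall>c f. F (\<lambda>a. c *\<^sub>R f a) = (\<lambda>a. c *\<^sub>R F f a))"

typedef (overloaded) ('n, 'v) lop = "{F :: ('n, 'v::real_vector) oper. linop F}"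
  by (rule exI[of _ "\<lambda>f. f"]) (simp add: linop_def)

setup_lifting type_definition_lop

instantiation lop :: (type, real_vector) "{real_algebra, monoid_mult}"
begin
lift_definition zero_lop :: "('a,'b) lop" is "\<lambda>f a. 0" by (simp add: linop_def)
lift_definition one_lop :: "('a,'b) lop" is "\<lambda>f. f" by (simp add: linop_def)
lift_definition plus_lop :: "('a,'b) lop \<Rightarrow> ('a,'b) lop \<Rightarrow> ('a,'b) lop" is
  "\<lambda>F G f a. F f a + G f a" by (simp add: linop_def fun_eq_iff algebra_simps)
lift_definition minus_lop :: "('a,'b) lop \<Rightarrow> ('a,'b) lop \<Rightarrow> ('a,'b) lop" is
  "\<lambda>F G f a. F f a - G f a" by (simp add: linop_def fun_eq_iff algebra_simps)
lift_definition uminus_lop :: "('a,'b) lop \<Rightarrow> ('a,'b) lop" is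
  "\<lambda>F f a. - F f a" by (simp add: linop_def fun_eq_iff algebra_simps)
lift_definition times_lop :: "('a,'b) lop \<Rightarrow> ('a,'b) lop \<Rightarrow> ('a,'b) lop" is
  "\<lambda>F G f. F (G f)" by (simp add: linop_def)
lift_definition scaleR_lop :: "real \<Rightarrow> ('a,'b) lop \<Rightarrow> ('a,'b) lop" is
  "\<lambda>c F f a. c *\<^sub>R F f a" by (simp add: linop_def fun_eq_iff algebra_simps)
instance
proof
  fix x y z :: "('a,'b) lop" and a b :: real
  show "x + y + z = x + (y + z)" by transfer (simp add: algebra_simps)
  show "x + y = y + x" by transfer (simp add: algebra_simps)
  show "0 + x = x" by transfer simp
  show "- x + x = 0" by transfer simp
  show "x - y = x + - y" by transfer simp
  show "a *\<^sub>R (x + y) = a *\<^sub>R x + a *\<^sub>R y" by transfer (simp add: algebra_simps)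
  show "(a + b) *\<^sub>R x = a *\<^sub>R x + b *\<^sub>R x" by transfer (simp add: algebra_simps)
  show "a *\<^sub>R b *\<^sub>R x = (a * b) *\<^sub>R x" by transfer simp
  show "1 *\<^sub>R x = x" by transfer simp
  show "x * y * z = x * (y * z)" by transfer simp
  show "(x + y) * z = x * z + y * z" by transfer simp
  show "x * (y + z) = x * y + x * z" by transfer (simp add: linop_def)
  show "a *\<^sub>R x * y = a *\<^sub>R (x * y)" by transfer simp
  show "x * a *\<^sub>R y = a *\<^sub>R (x * y)" by transfer (simp add: linop_def)
  show "1 * x = x" by transfer simp
  show "x * 1 = x" by transfer simp
qed
end

lemma Top_apply:
  "Top \<mu> i f \<alpha> = (real (\<alpha> i + 1) + \<mu> i * (1 - (-1) ^ (\<alpha> i + 1))) *\<^sub>R f (\<alpha>(i := \<alpha> i + 1))"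
  by (simp add: Top_def dop_def divx_def rop_def algebra_simps)

lift_definition mult_coord :: "'n \<Rightarrow> ('n, 'v::real_vector) lop" is xop
  by (simp add: linop_def xop_def fun_eq_iff)
lift_definition dunkl :: "('n \<Rightarrow> real) \<Rightarrow> 'n \<Rightarrow> ('n, 'v::real_vector) lop" is Top
  by (simp add: linop_def Top_apply fun_eq_iff algebra_simps)
lift_definition reflection :: "'n \<Rightarrow> ('n, 'v::real_vector) lop" is rop
  by (simp add: linop_def rop_def fun_eq_iff algebra_simps)
lift_definition reflection_prod :: "'n set \<Rightarrow> ('n, 'v::real_vector) lop" is rA
  by (simp add: linop_def rA_def fun_eq_iff algebra_simps)

lemma rop_xop_same: "rop i (xop i f) \<alpha> = - xop i (rop i f) \<alpha>"
  by (cases "\<alpha> i") (simp_all add: rop_def xop_def)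

lemma Top_xop_same:
  "Top \<mu> i (xop i f) \<alpha> = xop i (Top \<mu> i f) \<alpha> + f \<alpha> + (2 * \<mu> i) *\<^sub>R rop i f \<alpha>"
proof (cases "\<alpha> i")
  case 0
  then show ?thesis by (simp add: Top_apply xop_def rop_def algebra_simps fun_upd_idem)
next
  case (Suc m)
  have "Top \<mu> i (xop i f) \<alpha> = (real (m + 2) + \<mu> i * (1 - (-1) ^ (m + 2))) *\<^sub>R f \<alpha>"
    using Suc by (simp add: Top_apply xop_def fun_upd_idem)
  also have "\<dots> = (real (m + 1) + \<mu> i * (1 - (-1) ^ (m + 1)) + 1 + 2 * \<mu> i * (-1) ^ (m + 1)) *\<^sub>R f \<alpha>"
    by (simp add: algebra_simps)
  also have "\<dots> = xop i (Top \<mu> i f) \<alpha> + f \<alpha> + (2 * \<mu> i) *\<^sub>R rop i f \<alpha>"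
    using Suc by (simp add: Top_apply xop_def rop_def fun_upd_idem scaleR_add_left scaleR_diff_left scaleR_2)
  finally show ?thesis .
qed

lemma dunkl_mult_coord_same:
  "dunkl \<mu> i * mult_coord i = mult_coord i * dunkl \<mu> i + 1 + (2 * \<mu> i) *\<^sub>R reflection i"
  by transfer (simp add: fun_eq_iff Top_xop_same)

lemma mult_coord_commute: "mult_coord i * mult_coord j = mult_coord j * mult_coord i"
  by transfer (auto simp: fun_eq_iff xop_def fun_upd_twist)
lemma dunkl_commute: "dunkl \<mu> i * dunkl \<mu> j = dunkl \<mu> j * dunkl \<mu> i"
  by transfer (auto simp: fun_eq_iff Top_apply fun_upd_twist)
lemma mult_coord_dunkl: "i \<noteq> j \<Longrightarrow> mult_coord i * dunkl \<mu> j = dunkl \<mu> j * mult_coord i"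
  by transfer (auto simp: fun_eq_iff xop_def Top_apply fun_upd_twist)
lemma reflection_same: "reflection i * reflection i = 1"
  by transfer (simp add: fun_eq_iff rop_def)
lemma reflection_commute: "reflection i * reflection j = reflection j * reflection i"
  by transfer (simp add: fun_eq_iff rop_def)
lemma reflection_mult_coord: "i \<noteq> j \<Longrightarrow> reflection i * mult_coord j = mult_coord j * reflection i"
  by transfer (simp add: fun_eq_iff rop_def xop_def)
lemma reflection_dunkl: "i \<noteq> j \<Longrightarrow> reflection i * dunkl \<mu> j = dunkl \<mu> j * reflection i"
  by transfer (simp add: fun_eq_iff rop_def Top_apply)
lemma reflection_mult_coord_same: "reflection i * mult_coord i = - (mult_coord i * reflection i)"
  by transfer (simp add: fun_eq_iff rop_xop_same)
lemma reflection_dunkl_same: "reflection i * dunkl \<mu> i = - (dunkl \<mu> i * reflection i)"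
  by transfer (simp add: fun_eq_iff rop_def Top_apply)
lemma reflection_prod_empty: "reflection_prod {} = 1"
  by transfer (simp add: fun_eq_iff rA_def)
lemma reflection_prod_insert:
  "finite C \<Longrightarrow> j \<notin> C \<Longrightarrow> reflection_prod (insert j C) = reflection_prod C * reflection j"
  by transfer (simp add: fun_eq_iff rA_def rop_def mult.commute)

lemma Rep_lop_sum: "Rep_lop (sum u C) f = (\<lambda>\<alpha>. \<Sum>i\<in>C. Rep_lop (u i) f \<alpha>)"
  by (induction C rule: infinite_finite_induct) (auto simp: plus_lop.rep_eq zero_lop.rep_eq)

locale clifford_dunkl_model =
  fixes \<mu> :: "'n \<Rightarrow> real" and e :: "'n \<Rightarrow> 'v::real_vector \<Rightarrow> 'v"
  assumes linear_e: "linear (e i)"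
    and e_anticomm: "e i (e j v) + e j (e i v) = (if i = j then (-2) *\<^sub>R v else 0)"
begin

definition clifford :: "'n \<Rightarrow> ('n, 'v) lop" where "clifford i = Abs_lop (eop e i)"

lemma Rep_clifford: "Rep_lop (clifford i) = eop e i"
  using linear_e[of i]
  by (simp add: clifford_def Abs_lop_inverse linop_def eop_def fun_eq_iff linear_add linear_scale)

lemmas Rep_lop_simps = times_lop.rep_eq plus_lop.rep_eq minus_lop.rep_eq uminus_lop.rep_eq scaleR_lop.rep_eq
  one_lop.rep_eq zero_lop.rep_eq Rep_clifford mult_coord.rep_eq dunkl.rep_eq reflection.rep_eq
  reflection_prod.rep_eq

sublocale dunkl_clifford \<mu> clifford mult_coord "dunkl \<mu>" reflection reflection_prod
proof unfold_locales
  fix i j and C :: "'n set"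
  show "clifford i * clifford j + clifford j * clifford i = (if i = j then (-2) *\<^sub>R 1 else 0)"
    by (auto simp: Rep_lop_inject[symmetric] Rep_lop_simps eop_def e_anticomm fun_eq_iff)
  show "clifford i * mult_coord j = mult_coord j * clifford i"
    using linear_e[of i] by (simp add: Rep_lop_inject[symmetric] Rep_lop_simps eop_def xop_def fun_eq_iff linear_0)
  show "clifford i * dunkl \<mu> j = dunkl \<mu> j * clifford i"
    using linear_e[of i] by (simp add: Rep_lop_inject[symmetric] Rep_lop_simps eop_def Top_apply fun_eq_iff linear_scale)
  show "clifford i * reflection j = reflection j * clifford i"
    using linear_e[of i] by (simp add: Rep_lop_inject[symmetric] Rep_lop_simps eop_def rop_def fun_eq_iff linear_scale)
qed (fact mult_coord_commute dunkl_commute mult_coord_dunkl dunkl_mult_coord_same reflection_same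
  reflection_commute reflection_mult_coord reflection_dunkl reflection_mult_coord_same
  reflection_dunkl_same reflection_prod_empty reflection_prod_insert)+

lemma Rep_Gam: "Rep_lop (Gam A) = Gamma \<mu> e A"
  by (simp add: fun_eq_iff Gam_def S_def xvec_def dirac_def Y_def Z_def Rep_lop_sum Rep_lop_simps
      Gamma_def SA_def XA_def DA_def)

end

theorem lemma6:
  fixes \<mu> :: "'n::finite \<Rightarrow> real"
    and e :: "'n \<Rightarrow> 'v::real_vector \<Rightarrow> 'v"
    and A :: "'n set"
  assumes "card (UNIV :: 'n set) \<ge> 3"
    and "\<forall>i. \<mu> i > 0"
    and "\<forall>i. linear (e i)"
    and "\<forall>i j v. e i (e j v) + e j (e i v) = (if i = j then (-2) *\<^sub>R v else 0)"
  shows "\<exists>F \<in> gen_alg (Gamma \<mu> e). \<forall>f \<in> Pspace. Gamma \<mu> e A f = F f"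
proof -
  interpret clifford_dunkl_model \<mu> e
    by (rule clifford_dunkl_model.intro) (use assms(3,4) in auto)
  have "Rep_lop (Gam A) \<in> gen_alg (Gamma \<mu> e)"
  proof (rule Gam_in_subalgebra[where P = "\<lambda>u. Rep_lop u \<in> gen_alg (Gamma \<mu> e)"])
    show "\<mu> i \<noteq> 0" for i using assms(2) by (metis less_irrefl)
  qed (auto simp: Rep_lop_simps Rep_Gam intro: gen_alg.intros)
  then show ?thesis by (auto simp: Rep_Gam)
qed

end
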